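(* Let $X$ be a d-space such that the preorder $\le$ on $X$ induced by $\vec\pi_1(X)$ (namely $x\le y$ iff there is a morphism $x\to y$ in $\vec\pi_1(X)$) is antisymmetric and makes $X$ a compact pospace. Let $X=X_0\supseteq X_1\supseteq\dots\supseteq X_n=A$ with functors $P_i:\vec\pi_1(X,X_{i-1})\to\vec\pi_1(X,X_i)$ be an extremal model of $X$ in which each $X_i$ ($1\le i\le n$) is compact. Then $\mathrm{Ext}(\vec\pi_1(X,A))=\mathrm{Ext}(X)$; that is, the extremal model induces an isomorphism (equality) of the fundamental bipartite graphs $\vec\pi_1(X,\mathrm{Ext}(X))$ and $\vec\pi_1(X,\mathrm{Ext}(\vec\pi_1(X,A)))$.
   Context: A d-space is a topological space $X$ with a set $dX$ of continuous paths $[0,1]\to X$ (dipaths) containing all constant paths, closed under precomposition with continuous non-decreasing maps $[0,1]\to[0,1]$, and closed under concatenation; subsets carry the dipaths with image in the subset. $\vec I$ is $[0,1]$ with all continuous non-decreasing paths as dipaths. The fundamental category $\vec\pi_1(X)$ has as objects the points of $X$ and as morphisms $a\to b$ the classes of dipaths from $a$ to $b$ under the equivalence relation generated by endpoint-fixing directed homotopies (dimaps $H:\vec I\times\vec I\to X$ with $H(t,0)=\gamma(t)$, $H(t,1)=\gamma'(t)$, $H(0,s)=a$, $H(1,s)=b$); composition is concatenation. For $A\subseteq X$, $\vec\pi_1(X,A)$ is the full subcategory on objects in $A$. A pospace is a topological space with a partial order $\le$ that is a closed subset of $X\times X$. For a category $\mathcal C$, $x\le y$ iff there is a morphism $x\to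 y$; minimal, maximal, extremal objects are defined with respect to this preorder ($a$ minimal iff $x\le a\Rightarrow x=a$; maximal iff $a\le x\Rightarrow x=a$); $\mathrm{Ext}(\mathcal C)$ is the set of extremal objects and $\mathrm{Ext}(X)=\mathrm{Ext}(\vec\pi_1(X))$. For $A\subseteq B\subseteq X$ with inclusion $\iota:\vec\pi_1(X,A)\to\vec\pi_1(X,B)$, a future retract is a functor $P:\vec\pi_1(X,B)\to\vec\pi_1(X,A)$ left adjoint to $\iota$ with unit $\eta_a=\mathrm{id}_a$ for $a\in A$; a past retract is a right adjoint $P$ of $\iota$ with counit $\varepsilon_a=\mathrm{id}_a$ for $a\in A$. An extremal model of $X$ is a chain $X=X_0\supseteq\dots\supseteq X_n=A$ with functors $P_i:\vec\pi_1(X,X_{i-1})\to\vec\pi_1(X,X_i)$, each a future or past retract, with $\mathrm{Ext}(X)\subseteq A$. *)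

theory Defs
  imports "HOL-Analysis.Analysis"
begin

(* Paths are represented as functions real => 'a, only their values on [0,1]
   matter (membership in D is required to depend only on these values). *)

definition Ivec_dipath :: "(real \<Rightarrow> real) \<Rightarrow> bool" where
  "Ivec_dipath \<phi> \<longleftrightarrow> continuous_on {0..1} \<phi> \<and> \<phi> ` {0..1} \<subseteq> {0..1} \<and> mono_on {0..1} \<phi>"

definition dconcat :: "(real \<Rightarrow> 'a) \<Rightarrow> (real \<Rightarrow> 'a) \<Rightarrow> real \<Rightarrow> 'a" where
  "dconcat g1 g2 = (\<lambda>t. if t \<le> 1/2 then g1 (2 * t) else g2 (2 * t - 1))"

definition dspace :: "'a topology \<Rightarrow> (real \<Rightarrow> 'a) set \<Rightarrow> bool" where
  "dspace X D \<longleftrightarrow>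
     (\<forall>\<gamma>\<in>D. continuous_map (top_of_set {0..1}) X \<gamma>) \<and>
     (\<forall>x\<in>topspace X. (\<lambda>t. x) \<in> D) \<and>
     (\<forall>\<gamma>\<in>D. \<forall>\<phi>. Ivec_dipath \<phi> \<longrightarrow> \<gamma> \<circ> \<phi> \<in> D) \<and>
     (\<forall>\<gamma>\<in>D. \<forall>\<delta>\<in>D. \<gamma> 1 = \<delta> 0 \<longrightarrow> dconcat \<gamma> \<delta> \<in> D) \<and>
     (\<forall>\<gamma> \<delta>. (\<forall>t\<in>{0..1}. \<gamma> t = \<delta> t) \<longrightarrow> (\<gamma> \<in> D \<longleftrightarrow> \<delta> \<in> D))"

(* dimap from Ivec x Ivec into (X, D): continuous, and maps dipaths of the
   product d-space (pairs of Ivec dipaths) to dipaths *)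
definition dimap2 :: "'a topology \<Rightarrow> (real \<Rightarrow> 'a) set \<Rightarrow> (real \<times> real \<Rightarrow> 'a) \<Rightarrow> bool" where
  "dimap2 X D H \<longleftrightarrow> continuous_map (top_of_set ({0..1} \<times> {0..1})) X H \<and>
     (\<forall>\<delta>1 \<delta>2. Ivec_dipath \<delta>1 \<and> Ivec_dipath \<delta>2 \<longrightarrow> (\<lambda>t. H (\<delta>1 t, \<delta>2 t)) \<in> D)"

definition dihtpy :: "'a topology \<Rightarrow> (real \<Rightarrow> 'a) set \<Rightarrow> (real \<Rightarrow> 'a) \<Rightarrow> (real \<Rightarrow> 'a) \<Rightarrow> bool" where
  "dihtpy X D \<gamma> \<gamma>' \<longleftrightarrow> \<gamma> \<in> D \<and> \<gamma>' \<in> D \<and>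
     (\<exists>H. dimap2 X D H \<and>
        (\<forall>t\<in>{0..1}. H (t, 0) = \<gamma> t \<and> H (t, 1) = \<gamma>' t) \<and>
        (\<forall>s\<in>{0..1}. H (0, s) = \<gamma> 0 \<and> H (1, s) = \<gamma> 1))"

definition dclass :: "'a topology \<Rightarrow> (real \<Rightarrow> 'a) set \<Rightarrow> (real \<Rightarrow> 'a) \<Rightarrow> (real \<Rightarrow> 'a) set" where
  "dclass X D \<gamma> = {\<delta>. equivclp (dihtpy X D) \<gamma> \<delta>}"

definition dmor :: "'a topology \<Rightarrow> (real \<Rightarrow> 'a) set \<Rightarrow> 'a \<Rightarrow> 'a \<Rightarrow> (real \<Rightarrow> 'a) set set" where
  "dmor X D a b = dclass X D ` {\<gamma>\<in>D. \<gamma> 0 = a \<and> \<gamma> 1 = b}"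

definition did :: "'a topology \<Rightarrow> (real \<Rightarrow> 'a) set \<Rightarrow> 'a \<Rightarrow> (real \<Rightarrow> 'a) set" where
  "did X D a = dclass X D (\<lambda>t. a)"

(* composition in diagrammatic order: dseq f g = "first f, then g" (concatenation) *)
definition dseq :: "'a topology \<Rightarrow> (real \<Rightarrow> 'a) set \<Rightarrow> (real \<Rightarrow> 'a) set \<Rightarrow> (real \<Rightarrow> 'a) set \<Rightarrow> (real \<Rightarrow> 'a) set" where
  "dseq X D f g = {\<theta>. \<exists>\<gamma>\<in>f. \<exists>\<delta>\<in>g. equivclp (dihtpy X D) (dconcat \<gamma> \<delta>) \<theta>}"

definition dle :: "'a topology \<Rightarrow> (real \<Rightarrow> 'a) set \<Rightarrow> 'a \<Rightarrow> 'a \<Rightarrow> bool" where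
  "dle X D x y \<longleftrightarrow> dmor X D x y \<noteq> {}"

definition Ext :: "'a topology \<Rightarrow> (real \<Rightarrow> 'a) set \<Rightarrow> 'a set \<Rightarrow> 'a set" where
  "Ext X D S = {a\<in>S. (\<forall>x\<in>S. dle X D x a \<longrightarrow> x = a) \<or> (\<forall>x\<in>S. dle X D a x \<longrightarrow> x = a)}"

definition dfunctor :: "'a topology \<Rightarrow> (real \<Rightarrow> 'a) set \<Rightarrow> 'a set \<Rightarrow> 'a set \<Rightarrow>
     ('a \<Rightarrow> 'a) \<Rightarrow> ((real \<Rightarrow> 'a) set \<Rightarrow> (real \<Rightarrow> 'a) set) \<Rightarrow> bool" where
  "dfunctor X D B A Pob Pm \<longleftrightarrow>
     (\<forall>b\<in>B. Pob b \<in> A) \<and>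
     (\<forall>b\<in>B. \<forall>b'\<in>B. \<forall>f\<in>dmor X D b b'. Pm f \<in> dmor X D (Pob b) (Pob b')) \<and>
     (\<forall>b\<in>B. Pm (did X D b) = did X D (Pob b)) \<and>
     (\<forall>b\<in>B. \<forall>b'\<in>B. \<forall>b''\<in>B. \<forall>f\<in>dmor X D b b'. \<forall>g\<in>dmor X D b' b''.
        Pm (dseq X D f g) = dseq X D (Pm f) (Pm g))"

(* future retract: P left adjoint to the inclusion, with unit \<eta>, \<eta>_a = id_a on A
   (adjunction given by a natural transformation \<eta> : Id \<Rightarrow> \<iota>P that is universal) *)
definition future_retract :: "'a topology \<Rightarrow> (real \<Rightarrow> 'a) set \<Rightarrow> 'a set \<Rightarrow> 'a set \<Rightarrow>
     ('a \<Rightarrow> 'a) \<Rightarrow> ((real \<Rightarrow> 'a) set \<Rightarrow> (real \<Rightarrow> 'a) set) \<Rightarrow> bool" where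
  "future_retract X D B A Pob Pm \<longleftrightarrow> dfunctor X D B A Pob Pm \<and>
     (\<exists>\<eta>. (\<forall>b\<in>B. \<eta> b \<in> dmor X D b (Pob b)) \<and>
          (\<forall>b\<in>B. \<forall>b'\<in>B. \<forall>f\<in>dmor X D b b'. dseq X D f (\<eta> b') = dseq X D (\<eta> b) (Pm f)) \<and>
          (\<forall>b\<in>B. \<forall>a\<in>A. \<forall>f\<in>dmor X D b a. \<exists>!g. g \<in> dmor X D (Pob b) a \<and> dseq X D (\<eta> b) g = f) \<and>
          (\<forall>a\<in>A. \<eta> a = did X D a))"

(* past retract: P right adjoint to the inclusion, with counit \<epsilon>, \<epsilon>_a = id_a on A *)
definition past_retract :: "'a topology \<Rightarrow> (real \<Rightarrow> 'a) set \<Rightarrow> 'a set \<Rightarrow> 'a set \<Rightarrow>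
     ('a \<Rightarrow> 'a) \<Rightarrow> ((real \<Rightarrow> 'a) set \<Rightarrow> (real \<Rightarrow> 'a) set) \<Rightarrow> bool" where
  "past_retract X D B A Pob Pm \<longleftrightarrow> dfunctor X D B A Pob Pm \<and>
     (\<exists>\<epsilon>. (\<forall>b\<in>B. \<epsilon> b \<in> dmor X D (Pob b) b) \<and>
          (\<forall>b\<in>B. \<forall>b'\<in>B. \<forall>f\<in>dmor X D b b'. dseq X D (Pm f) (\<epsilon> b') = dseq X D (\<epsilon> b) f) \<and>
          (\<forall>b\<in>B. \<forall>a\<in>A. \<forall>f\<in>dmor X D a b. \<exists>!g. g \<in> dmor X D a (Pob b) \<and> dseq X D g (\<epsilon> b) = f) \<and>
          (\<forall>a\<in>A. \<epsilon> a = did X D a))"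

definition extremal_model :: "'a topology \<Rightarrow> (real \<Rightarrow> 'a) set \<Rightarrow> (nat \<Rightarrow> 'a set) \<Rightarrow> nat \<Rightarrow> bool" where
  "extremal_model X D Xs n \<longleftrightarrow>
     Xs 0 = topspace X \<and>
     (\<forall>i\<in>{1..n}. Xs i \<subseteq> Xs (i - 1)) \<and>
     (\<forall>i\<in>{1..n}. \<exists>Pob Pm. future_retract X D (Xs (i - 1)) (Xs i) Pob Pm \<or>
                           past_retract X D (Xs (i - 1)) (Xs i) Pob Pm) \<and>
     Ext X D (topspace X) \<subseteq> Xs n"

end

theory Submission
  imports Defs
begin

(* If a is minimal in A and x \<le> a, pick a minimal m \<le> x of X; then m \<in> Ext(X) \<subseteq> A,
   so m = a by minimality of a in A, hence x = a by antisymmetry.  Dually for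
   maximal points, so Ext(A) \<subseteq> Ext(X); the converse inclusion is immediate.
   Existence of minimal points is the classical fact about compact pospaces:
   by Zorn's lemma it suffices that chains have lower bounds, and the closed
   down-sets of a chain have the finite intersection property. *)

definition minimal_in :: "('a \<Rightarrow> 'a \<Rightarrow> bool) \<Rightarrow> 'a set \<Rightarrow> 'a \<Rightarrow> bool" where
  "minimal_in R S a \<longleftrightarrow> a \<in> S \<and> (\<forall>x\<in>S. R x a \<longrightarrow> x = a)"

lemma Ext_iff_minimal_in:
  "a \<in> Ext X D S \<longleftrightarrow> minimal_in (dle X D) S a \<or> minimal_in (\<lambda>x y. dle X D y x) S a"
  unfolding Ext_def minimal_in_def by blast

lemma minimal_in_superset:
  assumes trans: "\<And>x y z. R x y \<Longrightarrow> R y z \<Longrightarrow> R x z"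
    and antisym: "\<And>x y. x \<in> T \<Longrightarrow> y \<in> T \<Longrightarrow> R x y \<Longrightarrow> R y x \<Longrightarrow> x = y"
    and below: "\<And>x. x \<in> T \<Longrightarrow> \<exists>m. R m x \<and> minimal_in R T m"
    and minimal_in_A: "\<And>m. minimal_in R T m \<Longrightarrow> m \<in> A"
    and "A \<subseteq> T" and a: "minimal_in R A a"
  shows "minimal_in R T a"
  unfolding minimal_in_def
proof (intro conjI ballI impI)
  show aT: "a \<in> T" using a \<open>A \<subseteq> T\<close> unfolding minimal_in_def by blast
  fix x assume x: "x \<in> T" "R x a"
  obtain m where m: "R m x" "minimal_in R T m" using below[OF x(1)] by blast
  have "m = a" using a minimal_in_A[OF m(2)] trans[OF m(1) x(2)] unfolding minimal_in_def by blast
  then show "x = a" using antisym[OF x(1) aT x(2)] m(1) by blast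
qed

lemma finite_chain_has_least:
  assumes "finite S" "S \<noteq> {}"
    and chain: "\<forall>a\<in>S. \<forall>b\<in>S. R a b \<or> R b a"
    and trans: "\<And>a b c. R a b \<Longrightarrow> R b c \<Longrightarrow> R a c"
  shows "\<exists>m\<in>S. \<forall>s\<in>S. R m s"
  using assms(1,2) chain
proof (induction S rule: finite_ne_induct)
  case (singleton x)
  then show ?case by blast
next
  case (insert x F)
  then obtain m where m: "m \<in> F" "\<forall>s\<in>F. R m s" by blast
  show ?case
  proof (cases "R x m")
    case True
    then have "\<forall>s\<in>insert x F. R x s" using m insert.prems trans by blast
    then show ?thesis by blast
  next
    case False
    then have "R m x" using insert.prems m(1) by blast
    then show ?thesis using m by blast
  qed
qed

(* In a compact space whose principal down-sets are closed, every nonempty chain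
   has a lower bound: the down-sets of its elements have the finite intersection
   property, since a finite subchain has a least element. *)
lemma compact_chain_has_lower_bound:
  assumes compact: "compact_space X"
    and refl: "\<And>x. x \<in> topspace X \<Longrightarrow> R x x"
    and trans: "\<And>x y z. R x y \<Longrightarrow> R y z \<Longrightarrow> R x z"
    and closed: "\<And>c. c \<in> topspace X \<Longrightarrow> closedin X {y \<in> topspace X. R y c}"
    and C: "C \<subseteq> topspace X" "C \<noteq> {}" "\<forall>a\<in>C. \<forall>b\<in>C. R a b \<or> R b a"
  shows "\<exists>u\<in>topspace X. \<forall>c\<in>C. R u c"
proof -
  define down where "down c = {y \<in> topspace X. R y c}" for c
  have fip: "\<Inter>F \<noteq> {}" if F: "finite F" "F \<subseteq> down ` C" for F
  proof -
    obtain S where S: "S \<subseteq> C" "finite S" "F = down ` S"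
      using F by (meson finite_subset_image)
    show ?thesis
    proof (cases "S = {}")
      case False
      then obtain m where "m \<in> S" "\<forall>s\<in>S. R m s"
        using finite_chain_has_least[OF S(2)] C(3) S(1) trans by (metis subsetD)
      then have "m \<in> \<Inter>F" using S C(1) refl unfolding down_def by auto
      then show ?thesis by blast
    qed (use S in simp)
  qed
  have "\<Inter>(down ` C) \<noteq> {}"
    using compact_space_fip[THEN iffD1, OF compact, rule_format, of "down ` C"]
      closed C(1) fip unfolding down_def by blast
  then obtain u where "u \<in> \<Inter>(down ` C)" by blast
  then show ?thesis using C(2) unfolding down_def by blast
qed

lemma compact_exists_minimal_below:
  assumes compact: "compact_space X"
    and refl: "\<And>x. x \<in> topspace X \<Longrightarrow> R x x"
    and trans: "\<And>x y z. R x y \<Longrightarrow> R y z \<Longrightarrow> R x z"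
    and antisym: "\<And>x y. x \<in> topspace X \<Longrightarrow> y \<in> topspace X \<Longrightarrow> R x y \<Longrightarrow> R y x \<Longrightarrow> x = y"
    and closed: "\<And>c. c \<in> topspace X \<Longrightarrow> closedin X {y \<in> topspace X. R y c}"
    and x: "x \<in> topspace X"
  shows "\<exists>m. R m x \<and> minimal_in R (topspace X) m"
proof -
  define A where "A = {y \<in> topspace X. R y x}"
  define above where "above a b \<longleftrightarrow> R b a" for a b
  have order: "partial_order_on A (relation_of above A)"
    unfolding partial_order_on_def preorder_on_def relation_of_def refl_on_def
      trans_def antisym_def A_def above_def
    using refl trans antisym by blast
  have "\<exists>u\<in>A. \<forall>a\<in>C. above a u" if C: "C \<in> Chains (relation_of above A)" for C
  proof -
    have CA: "C \<subseteq> A" using C unfolding Chains_def relation_of_def by blast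
    have sub: "insert x C \<subseteq> topspace X" using CA x unfolding A_def by blast
    have chain: "\<forall>a\<in>insert x C. \<forall>b\<in>insert x C. R a b \<or> R b a"
      using C CA refl x unfolding Chains_def relation_of_def A_def above_def by blast
    have "\<exists>u\<in>topspace X. \<forall>c\<in>insert x C. R u c"
      by (rule compact_chain_has_lower_bound[OF compact]) (use refl trans closed sub chain in auto)
    then obtain u where "u \<in> topspace X" "\<forall>c\<in>insert x C. R u c" by blast
    then show ?thesis unfolding A_def above_def by blast
  qed
  then obtain m where m: "m \<in> A" "\<forall>a\<in>A. above m a \<longrightarrow> a = m"
    using predicate_Zorn[OF order] by blast
  have "minimal_in R (topspace X) m"
    unfolding minimal_in_def
  proof (intro conjI ballI impI)
    show "m \<in> topspace X" using m(1) unfolding A_def by simp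
    fix y assume "y \<in> topspace X" "R y m"
    then show "y = m" using m trans[of y m x] unfolding A_def above_def by blast
  qed
  then show ?thesis using m(1) unfolding A_def by blast
qed

lemma dle_refl:
  assumes "dspace X D" "x \<in> topspace X"
  shows "dle X D x x"
proof -
  have "(\<lambda>t. x) \<in> D" using assms unfolding dspace_def by blast
  then show ?thesis unfolding dle_def dmor_def by blast
qed

lemma dle_trans:
  assumes "dspace X D" "dle X D x y" "dle X D y z"
  shows "dle X D x z"
proof -
  obtain \<gamma> where \<gamma>: "\<gamma> \<in> D" "\<gamma> 0 = x" "\<gamma> 1 = y"
    using assms(2) unfolding dle_def dmor_def by blast
  obtain \<delta> where \<delta>: "\<delta> \<in> D" "\<delta> 0 = y" "\<delta> 1 = z"
    using assms(3) unfolding dle_def dmor_def by blast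
  have "dconcat \<gamma> \<delta> \<in> D" using assms(1) \<gamma> \<delta> unfolding dspace_def by metis
  moreover have "dconcat \<gamma> \<delta> 0 = x" "dconcat \<gamma> \<delta> 1 = z"
    using \<gamma> \<delta> unfolding dconcat_def by auto
  ultimately show ?thesis unfolding dle_def dmor_def by blast
qed

(* In a pospace (closed order graph) the principal down-sets and up-sets are closed,
   as preimages of the graph under y \<mapsto> (y, c) and y \<mapsto> (c, y). *)
lemma closed_graph_cones:
  assumes graph: "closedin (prod_topology X X) {(x, y). x \<in> topspace X \<and> y \<in> topspace X \<and> R x y}"
    and c: "c \<in> topspace X"
  shows "closedin X {y \<in> topspace X. R y c}" "closedin X {y \<in> topspace X. R c y}"
proof -
  have "closedin X {y \<in> topspace X. (y, c) \<in> {(x, y). x \<in> topspace X \<and> y \<in> topspace X \<and> R x y}}"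
    by (rule closedin_continuous_map_preimage[OF _ graph]) (simp add: c continuous_map_pairedI)
  then show "closedin X {y \<in> topspace X. R y c}" using c by simp
  have "closedin X {y \<in> topspace X. (c, y) \<in> {(x, y). x \<in> topspace X \<and> y \<in> topspace X \<and> R x y}}"
    by (rule closedin_continuous_map_preimage[OF _ graph]) (simp add: c continuous_map_pairedI)
  then show "closedin X {y \<in> topspace X. R c y}" using c by simp
qed

lemma extremal_model_subset:
  assumes "extremal_model X D Xs n" "i \<le> n"
  shows "Xs i \<subseteq> topspace X"
  using assms(2)
proof (induction i)
  case 0
  then show ?case using assms(1) unfolding extremal_model_def by simp
next
  case (Suc i)
  then have "Xs (Suc i) \<subseteq> Xs i" using assms(1) unfolding extremal_model_def
    by (metis Suc_eq_plus1 atLeastAtMost_iff diff_Suc_1 le_add2)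
  then show ?case using Suc by simp
qed

theorem theorem3p2:
  fixes X :: "'a topology" and D :: "(real \<Rightarrow> 'a) set"
    and Xs :: "nat \<Rightarrow> 'a set" and n :: nat
  assumes "dspace X D"
    and "\<forall>x\<in>topspace X. \<forall>y\<in>topspace X. dle X D x y \<and> dle X D y x \<longrightarrow> x = y"
    and "compact_space X"
    and "closedin (prod_topology X X) {(x, y). x \<in> topspace X \<and> y \<in> topspace X \<and> dle X D x y}"
    and "extremal_model X D Xs n"
    and "\<forall>i\<in>{1..n}. compactin X (Xs i)"
  shows "Ext X D (Xs n) = Ext X D (topspace X)"
proof -
  let ?le = "dle X D" and ?ge = "\<lambda>x y. dle X D y x" and ?T = "topspace X"
  have A: "Xs n \<subseteq> ?T" using extremal_model_subset[OF assms(5)] by simp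
  have Ext_A: "Ext X D ?T \<subseteq> Xs n" using assms(5) unfolding extremal_model_def by blast
  note refl = dle_refl[OF assms(1)] and trans = dle_trans[OF assms(1)]
  have antisym: "\<And>x y. x \<in> ?T \<Longrightarrow> y \<in> ?T \<Longrightarrow> ?le x y \<Longrightarrow> ?le y x \<Longrightarrow> x = y"
    using assms(2) by blast
  note cones = closed_graph_cones[OF assms(4)]
  have min_below: "\<exists>m. ?le m x \<and> minimal_in ?le ?T m" if "x \<in> ?T" for x
    using compact_exists_minimal_below[OF assms(3) refl trans antisym cones(1) that] .
  have max_above: "\<exists>m. ?ge m x \<and> minimal_in ?ge ?T m" if "x \<in> ?T" for x
    using compact_exists_minimal_below[OF assms(3) refl _ _ cones(2) that] trans antisym
    by blast
  have minimal_in_T: "minimal_in ?le ?T a" if "minimal_in ?le (Xs n) a" for a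
    by (rule minimal_in_superset[where A = "Xs n"])
      (use trans antisym min_below Ext_A A that in \<open>auto simp: Ext_iff_minimal_in\<close>)
  have maximal_in_T: "minimal_in ?ge ?T a" if "minimal_in ?ge (Xs n) a" for a
    by (rule minimal_in_superset[where A = "Xs n"])
      (use trans antisym max_above Ext_A A that in \<open>auto simp: Ext_iff_minimal_in\<close>)
  have "Ext X D (Xs n) \<subseteq> Ext X D ?T"
    using minimal_in_T maximal_in_T unfolding subset_iff Ext_iff_minimal_in by blast
  moreover have "Ext X D ?T \<subseteq> Ext X D (Xs n)" using Ext_A A unfolding Ext_def by blast
  ultimately show ?thesis by blast
qed

end
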